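(* Let $\mathbb{F}$ be a non-Archimedean local field with ring of integers $\mathcal{O}$, let $V$ and $W$ be finite-dimensional $\mathbb{F}$-vector spaces, and let $L\subset V$ be a lattice. Let $F_0\colon W\to V$ be an injective linear map. Then there exists a neighborhood $U$ of $F_0$ in $\mathrm{Hom}_{\mathbb{F}}(W,V)$ such that every $F\in U$ is injective and $$F^{-1}(\mathrm{Im}(F)\cap L)=F_0^{-1}(\mathrm{Im}(F_0)\cap L).$$
   Context: Finite-dimensional $\mathbb{F}$-vector spaces carry their natural (product) topology, and $\mathrm{Hom}_{\mathbb{F}}(W,V)$ is topologized as a finite-dimensional vector space. A lattice in $V$ is a compact open $\mathcal{O}$-submodule of $V$. *)

theory Defs
  imports "HOL-Analysis.Analysis"
begin

definition nonarch_abs :: "('k::field \<Rightarrow> real) \<Rightarrow> bool" where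
  "nonarch_abs nv \<longleftrightarrow>
     (\<forall>x. 0 \<le> nv x) \<and> (\<forall>x. nv x = 0 \<longleftrightarrow> x = 0) \<and>
     (\<forall>x y. nv (x * y) = nv x * nv y) \<and>
     (\<forall>x y. nv (x + y) \<le> max (nv x) (nv y))"

definition field_top :: "('k::field \<Rightarrow> real) \<Rightarrow> 'k topology" where
  "field_top nv = Metric_space.mtopology UNIV (\<lambda>x y. nv (x - y))"

definition nonarch_local_field :: "('k::field \<Rightarrow> real) \<Rightarrow> bool" where
  "nonarch_local_field nv \<longleftrightarrow>
     nonarch_abs nv \<and> (\<exists>x. nv x \<noteq> 0 \<and> nv x \<noteq> 1) \<and>
     locally_compact_space (field_top nv)"

definition int_ring :: "('k::field \<Rightarrow> real) \<Rightarrow> 'k set" where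
  "int_ring nv = {x. nv x \<le> 1}"

text \<open>Finite-dimensional vector spaces are modelled as coordinate spaces
  'n \<Rightarrow> 'k with 'n finite, carrying the product topology.\<close>
definition vec_top :: "('k::field \<Rightarrow> real) \<Rightarrow> ('n \<Rightarrow> 'k) topology" where
  "vec_top nv = product_topology (\<lambda>_. field_top nv) UNIV"

text \<open>Hom(W,V) is modelled by matrices 'n \<Rightarrow> 'm \<Rightarrow> 'k (V = 'n-coordinates,
  W = 'm-coordinates), topologized as a finite-dimensional vector space,
  i.e. with the product topology on the entries.\<close>
definition hom_top :: "('k::field \<Rightarrow> real) \<Rightarrow> ('n \<Rightarrow> 'm \<Rightarrow> 'k) topology" where
  "hom_top nv = product_topology (\<lambda>_. vec_top nv) UNIV"

definition mat_app :: "('n \<Rightarrow> 'm::finite \<Rightarrow> 'k::field) \<Rightarrow> ('m \<Rightarrow> 'k) \<Rightarrow> ('n \<Rightarrow> 'k)" where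
  "mat_app A w = (\<lambda>i. \<Sum>j\<in>UNIV. A i j * w j)"

definition is_lattice :: "('k::field \<Rightarrow> real) \<Rightarrow> ('n \<Rightarrow> 'k) set \<Rightarrow> bool" where
  "is_lattice nv L \<longleftrightarrow>
     (\<lambda>_. 0) \<in> L \<and> (\<forall>u\<in>L. \<forall>v\<in>L. (\<lambda>i. u i + v i) \<in> L) \<and>
     (\<forall>c\<in>int_ring nv. \<forall>v\<in>L. (\<lambda>i. c * v i) \<in> L) \<and>
     compactin (vec_top nv) L \<and> openin (vec_top nv) L"

end

theory Submission
  imports Defs
begin

(* Measure coordinate vectors by the sup norm |v| = max_i |v_i| and matrices by
   their largest entry.  A lattice L is sandwiched between two balls,
   {|v| < r} \<subseteq> L \<subseteq> {|v| \<le> R}, and the injective F0 is coercive,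
   |w| \<le> C |F0 w|, via a left inverse.  Because the absolute value is
   ultrametric, the same bound |w| \<le> C |F w| holds whenever C |F - F0| < 1,
   so such F are injective.  If moreover |F - F0| C R < r, then F0 w \<in> L gives
   |w| \<le> C R, hence |(F - F0) w| < r, i.e. (F - F0) w \<in> L and
   F w = F0 w + (F - F0) w \<in> L; the roles of F and F0 are symmetric. *)

definition sup_norm :: "('k::field \<Rightarrow> real) \<Rightarrow> ('i::finite \<Rightarrow> 'k) \<Rightarrow> real" where
  "sup_norm nv v = Max (range (\<lambda>i. nv (v i)))"

definition mat_norm :: "('k::field \<Rightarrow> real) \<Rightarrow> ('i::finite \<Rightarrow> 'j::finite \<Rightarrow> 'k) \<Rightarrow> real" where
  "mat_norm nv F = Max (range (\<lambda>(i, j). nv (F i j)))"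

lemma sup_norm_ge: "nv (v i) \<le> sup_norm nv v"
  unfolding sup_norm_def by simp

lemma sup_norm_le_iff: "sup_norm nv v \<le> t \<longleftrightarrow> (\<forall>i. nv (v i) \<le> t)"
  unfolding sup_norm_def by simp

lemma mat_norm_ge: "nv (F i j) \<le> mat_norm nv F"
  unfolding mat_norm_def by (rule Max_ge) auto

lemma mat_norm_less_iff: "mat_norm nv F < t \<longleftrightarrow> (\<forall>i j. nv (F i j) < t)"
  unfolding mat_norm_def by auto

lemma mat_app_diff_left: "mat_app (F - G) w = mat_app F w - mat_app G w"
  by (simp add: mat_app_def fun_eq_iff sum_subtractf left_diff_distrib)

lemma mat_app_diff_right: "mat_app F (v - w) = mat_app F v - mat_app F w"
  by (simp add: mat_app_def fun_eq_iff sum_subtractf right_diff_distrib)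

lemma inj_mat_app_imp_left_inverse:
  fixes F :: "'n::finite \<Rightarrow> 'm::finite \<Rightarrow> 'k::field"
  assumes "inj (mat_app F)"
  obtains B :: "'m \<Rightarrow> 'n \<Rightarrow> 'k" where "\<And>w. mat_app B (mat_app F w) = w"
proof -
  define A :: "'k^'m^'n" where "A = (\<chi> i j. F i j)"
  have A_mult: "A *v x = vec_lambda (mat_app F (vec_nth x))" for x
    by (simp add: A_def matrix_vector_mult_def mat_app_def)
  have "inj ((*v) A)"
  proof (rule injI)
    fix x y
    assume "A *v x = A *v y"
    then have "mat_app F (vec_nth x) = mat_app F (vec_nth y)"
      unfolding A_mult by (metis vec_lambda_inverse UNIV_I)
    then show "x = y"
      using assms by (simp add: inj_eq vec_nth_inject)
  qed
  then obtain B :: "'k^'n^'m" where B: "B ** A = mat 1"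
    using matrix_left_invertible_injective by blast
  show thesis
  proof
    fix w :: "'m \<Rightarrow> 'k"
    have inverse: "vec_lambda w = B *v (A *v vec_lambda w)"
      by (simp add: matrix_vector_mul_assoc B)
    have "w j = mat_app (\<lambda>j i. B $ j $ i) (mat_app F w) j" for j
      using arg_cong[OF inverse, of "\<lambda>v. v $ j"]
      by (simp add: A_def matrix_vector_mult_def mat_app_def)
    then show "mat_app (\<lambda>j i. B $ j $ i) (mat_app F w) = w"
      by auto
  qed
qed

context
  fixes nv :: "'k::field \<Rightarrow> real"
  assumes nv: "nonarch_abs nv"
begin

lemma nonarch_abs_nonneg: "0 \<le> nv x"
  using nv unfolding nonarch_abs_def by blast

lemma nonarch_abs_eq_0_iff: "nv x = 0 \<longleftrightarrow> x = 0"
  using nv unfolding nonarch_abs_def by blast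

lemma nonarch_abs_mult: "nv (x * y) = nv x * nv y"
  using nv unfolding nonarch_abs_def by blast

lemma nonarch_abs_add_le_max: "nv (x + y) \<le> max (nv x) (nv y)"
  using nv unfolding nonarch_abs_def by blast

lemma nonarch_abs_zero [simp]: "nv 0 = 0"
  by (simp add: nonarch_abs_eq_0_iff)

lemma nonarch_abs_minus [simp]: "nv (- x) = nv x"
proof -
  have "nv 1 = nv 1 * nv 1"
    using nonarch_abs_mult[of 1 1] by simp
  then have "nv 1 = 1"
    using nonarch_abs_eq_0_iff[of 1] by simp
  then have "(nv (- 1))\<^sup>2 = 1"
    using nonarch_abs_mult[of "- 1" "- 1"] by (simp add: power2_eq_square)
  then have "nv (- 1) = 1"
    using nonarch_abs_nonneg[of "- 1"] by (simp add: power2_eq_1_iff)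
  then show ?thesis
    using nonarch_abs_mult[of "- 1" x] by simp
qed

lemma nonarch_abs_minus_commute: "nv (x - y) = nv (y - x)"
  using nonarch_abs_minus[of "x - y"] by simp

lemma nonarch_abs_diff_le_max: "nv (x - y) \<le> max (nv x) (nv y)"
  using nonarch_abs_add_le_max[of x "- y"] by simp

lemma nonarch_abs_sum_le:
  assumes "0 \<le> t" and "\<And>i. i \<in> S \<Longrightarrow> nv (f i) \<le> t"
  shows "nv (sum f S) \<le> t"
  using assms(2)
proof (induction S rule: infinite_finite_induct)
  case (insert i S)
  have "nv (sum f (insert i S)) \<le> max (nv (f i)) (nv (sum f S))"
    using insert.hyps nonarch_abs_add_le_max by simp
  also have "\<dots> \<le> t"
    using insert by simp
  finally show ?case .
qed (use assms(1) in simp_all)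

lemma metric_space_nonarch_abs: "Metric_space UNIV (\<lambda>x y. nv (x - y))"
proof
  fix x y z :: 'k
  show "0 \<le> nv (x - y)" "nv (x - y) = nv (y - x)" "nv (x - y) = 0 \<longleftrightarrow> x = y"
    by (simp_all add: nonarch_abs_nonneg nonarch_abs_minus_commute nonarch_abs_eq_0_iff)
  have "nv (x - z) = nv ((x - y) + (y - z))"
    by simp
  also have "\<dots> \<le> max (nv (x - y)) (nv (y - z))"
    by (rule nonarch_abs_add_le_max)
  also have "\<dots> \<le> nv (x - y) + nv (y - z)"
    by (simp add: nonarch_abs_nonneg)
  finally show "nv (x - z) \<le> nv (x - y) + nv (y - z)" .
qed

interpretation field_metric: Metric_space UNIV "\<lambda>x y. nv (x - y)"
  by (rule metric_space_nonarch_abs)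

lemma openin_field_top_ball: "openin (field_top nv) {x. nv (x - a) < e}"
proof -
  have "{x. nv (x - a) < e} = field_metric.mball a e"
    by (auto simp: nonarch_abs_minus_commute)
  then show ?thesis
    unfolding field_top_def by simp
qed

lemma sup_norm_nonneg: "0 \<le> sup_norm nv v"
  using sup_norm_ge[of nv v] nonarch_abs_nonneg by (meson order_trans)

lemma mat_norm_nonneg: "0 \<le> mat_norm nv F"
  using mat_norm_ge[of nv F] nonarch_abs_nonneg by (meson order_trans)

lemma sup_norm_eq_0_iff: "sup_norm nv v = 0 \<longleftrightarrow> v = (\<lambda>_. 0)"
proof -
  have "nv (v i) \<le> 0 \<longleftrightarrow> v i = 0" for i
    using nonarch_abs_nonneg[of "v i"] nonarch_abs_eq_0_iff[of "v i"] by linarith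
  then show ?thesis
    using sup_norm_le_iff[of nv v 0] sup_norm_nonneg[of v] by (auto simp: fun_eq_iff)
qed

lemma sup_norm_zero [simp]: "sup_norm nv (\<lambda>_. 0) = 0"
  by (simp add: sup_norm_eq_0_iff)

lemma mat_norm_minus_commute: "mat_norm nv (F - G) = mat_norm nv (G - F)"
  unfolding mat_norm_def by (simp add: nonarch_abs_minus_commute)

lemma sup_norm_diff_le_max: "sup_norm nv (u - v) \<le> max (sup_norm nv u) (sup_norm nv v)"
  unfolding sup_norm_le_iff
  using nonarch_abs_diff_le_max sup_norm_ge
  by (metis (no_types, opaque_lifting) minus_apply max.mono order_trans)

lemma sup_norm_mat_app_le: "sup_norm nv (mat_app F w) \<le> mat_norm nv F * sup_norm nv w"
  unfolding sup_norm_le_iff mat_app_def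
proof (intro allI nonarch_abs_sum_le)
  show "0 \<le> mat_norm nv F * sup_norm nv w"
    by (simp add: mat_norm_nonneg sup_norm_nonneg)
  fix i j
  show "nv (F i j * w j) \<le> mat_norm nv F * sup_norm nv w"
    unfolding nonarch_abs_mult
    by (intro mult_mono mat_norm_ge sup_norm_ge mat_norm_nonneg nonarch_abs_nonneg)
qed

lemma openin_hom_top_mat_norm_ball: "openin (hom_top nv) {F. mat_norm nv (F - F0) < d}"
proof -
  have "{F. mat_norm nv (F - F0) < d} = (\<Pi>\<^sub>E i\<in>UNIV. \<Pi>\<^sub>E j\<in>UNIV. {x. nv (x - F0 i j) < d})"
    by (auto simp: mat_norm_less_iff PiE_UNIV_domain)
  then show ?thesis
    unfolding hom_top_def vec_top_def by (simp add: openin_PiE_gen openin_field_top_ball)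
qed

lemma openin_vec_top_contains_sup_norm_ball:
  fixes L :: "('n::finite \<Rightarrow> 'k) set"
  assumes "openin (vec_top nv) L" and "(\<lambda>_. 0) \<in> L"
  obtains r where "r > 0" and "\<And>v. sup_norm nv v < r \<Longrightarrow> v \<in> L"
proof -
  obtain U where U: "\<forall>i\<in>UNIV. openin (field_top nv) (U i)" "(\<lambda>_. 0) \<in> Pi\<^sub>E UNIV U"
    "Pi\<^sub>E UNIV U \<subseteq> L"
    using assms unfolding vec_top_def openin_product_topology_alt by blast
  have "\<exists>\<rho>>0. field_metric.mball 0 \<rho> \<subseteq> U i" for i
  proof -
    have "0 \<in> U i"
      using U(2) by (simp add: PiE_iff)
    then show ?thesis
      using U(1) unfolding field_top_def field_metric.openin_mtopology by blast
  qed
  then obtain \<rho> where \<rho>: "\<And>i. \<rho> i > 0" "\<And>i. field_metric.mball 0 (\<rho> i) \<subseteq> U i"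
    by metis
  show thesis
  proof
    show "Min (range \<rho>) > 0"
      using \<rho>(1) by simp
    fix v :: "'n \<Rightarrow> 'k"
    assume "sup_norm nv v < Min (range \<rho>)"
    then have "v i \<in> field_metric.mball 0 (\<rho> i)" for i
      using sup_norm_ge[of nv v i] by (simp add: order.strict_trans1)
    then have "v i \<in> U i" for i
      using \<rho>(2) by blast
    then have "v \<in> Pi\<^sub>E UNIV U"
      by (simp add: PiE_UNIV_domain)
    then show "v \<in> L"
      using U(3) by blast
  qed
qed

lemma compactin_field_top_bounded:
  assumes "compactin (field_top nv) K"
  obtains R where "\<And>x. x \<in> K \<Longrightarrow> nv x \<le> R"
proof -
  have "field_metric.mbounded K"
    using assms unfolding field_top_def by (rule field_metric.compactin_imp_mbounded)
  then obtain a B where aB: "K \<subseteq> field_metric.mcball a B"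
    unfolding field_metric.mbounded_def by blast
  show thesis
  proof
    fix x
    assume "x \<in> K"
    have "nv x = nv (a - (a - x))"
      by simp
    also have "\<dots> \<le> max (nv a) (nv (a - x))"
      by (rule nonarch_abs_diff_le_max)
    also have "\<dots> \<le> max (nv a) B"
      using aB \<open>x \<in> K\<close> by auto
    finally show "nv x \<le> max (nv a) B" .
  qed
qed

lemma compactin_vec_top_sup_norm_bounded:
  fixes K :: "('n::finite \<Rightarrow> 'k) set"
  assumes "compactin (vec_top nv) K"
  obtains R where "R > 0" and "\<And>v. v \<in> K \<Longrightarrow> sup_norm nv v \<le> R"
proof -
  have "compactin (field_top nv) ((\<lambda>v. v i) ` K)" for i
    using image_compactin[OF assms[unfolded vec_top_def] continuous_map_product_projection]
    by simp
  then have "\<exists>R. \<forall>v\<in>K. nv (v i) \<le> R" for i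
    by (metis compactin_field_top_bounded image_eqI)
  then obtain R where R: "\<And>i v. v \<in> K \<Longrightarrow> nv (v i) \<le> R i"
    by metis
  show thesis
  proof
    show "max (Max (range R)) 1 > 0"
      by simp
    fix v :: "'n \<Rightarrow> 'k"
    assume "v \<in> K"
    have "R i \<le> Max (range R)" for i
      by (rule Max_ge) auto
    then show "sup_norm nv v \<le> max (Max (range R)) 1"
      unfolding sup_norm_le_iff using R[OF \<open>v \<in> K\<close>] by (meson max.coboundedI1 order_trans)
  qed
qed

lemma inj_mat_app_imp_coercive:
  fixes F :: "'n::finite \<Rightarrow> 'm::finite \<Rightarrow> 'k"
  assumes "inj (mat_app F)"
  obtains C where "C > 0" and "\<And>w. sup_norm nv w \<le> C * sup_norm nv (mat_app F w)"
proof -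
  obtain B where B: "\<And>w. mat_app B (mat_app F w) = w"
    using inj_mat_app_imp_left_inverse[OF assms] by blast
  show thesis
  proof
    show "mat_norm nv B + 1 > 0"
      using mat_norm_nonneg[of B] by simp
    fix w
    have "sup_norm nv w \<le> mat_norm nv B * sup_norm nv (mat_app F w)"
      using sup_norm_mat_app_le[of B "mat_app F w"] by (simp add: B)
    also have "\<dots> \<le> (mat_norm nv B + 1) * sup_norm nv (mat_app F w)"
      by (simp add: distrib_right sup_norm_nonneg)
    finally show "sup_norm nv w \<le> (mat_norm nv B + 1) * sup_norm nv (mat_app F w)" .
  qed
qed

lemma coercive_perturb:
  assumes "0 \<le> C"
    and coercive: "\<And>w. sup_norm nv w \<le> C * sup_norm nv (mat_app F0 w)"
    and small: "C * mat_norm nv (F - F0) < 1"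
  shows "sup_norm nv w \<le> C * sup_norm nv (mat_app F w)"
proof -
  define s where "s = sup_norm nv w"
  define t where "t = sup_norm nv (mat_app F w)"
  define d where "d = mat_norm nv (F - F0)"
  have "mat_app F0 w = mat_app F w - mat_app (F - F0) w"
    by (simp add: mat_app_diff_left fun_eq_iff)
  then have "sup_norm nv (mat_app F0 w) \<le> max t (sup_norm nv (mat_app (F - F0) w))"
    unfolding t_def by (simp only: sup_norm_diff_le_max)
  also have "\<dots> \<le> max t (d * s)"
    unfolding d_def s_def by (intro max.mono order_refl sup_norm_mat_app_le)
  finally have s_le: "s \<le> C * max t (d * s)"
    using coercive[of w] mult_left_mono[OF _ assms(1)] unfolding s_def by (meson order_trans)
  show ?thesis
  proof (cases "d * s \<le> t")
    case True
    then show ?thesis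
      using s_le unfolding s_def t_def by (simp add: max_def)
  next
    case False
    then have "s \<le> (C * d) * s"
      using s_le by (simp add: max_def mult.assoc)
    moreover have "0 \<le> s"
      unfolding s_def by (rule sup_norm_nonneg)
    ultimately have "s = 0"
      using small mult_strict_right_mono[of "C * d" 1 s] unfolding d_def by fastforce
    then show ?thesis
      using assms(1) sup_norm_nonneg[of "mat_app F w"] unfolding s_def by simp
  qed
qed

lemma coercive_imp_inj:
  assumes "\<And>w. sup_norm nv w \<le> C * sup_norm nv (mat_app F w)"
  shows "inj (mat_app F)"
proof (rule injI)
  fix v w
  assume "mat_app F v = mat_app F w"
  then have "mat_app F (v - w) = (\<lambda>_. 0)"
    by (simp add: mat_app_diff_right fun_eq_iff)
  then have "sup_norm nv (v - w) \<le> 0"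
    using assms[of "v - w"] by simp
  then have "v - w = (\<lambda>_. 0)"
    using sup_norm_nonneg sup_norm_eq_0_iff by (meson order.antisym)
  then show "v = w"
    by (simp add: fun_eq_iff)
qed

lemma perturbed_mat_app_mem:
  assumes L_add: "\<And>u v. u \<in> L \<Longrightarrow> v \<in> L \<Longrightarrow> (\<lambda>i. u i + v i) \<in> L"
    and L_ball: "\<And>v. sup_norm nv v < r \<Longrightarrow> v \<in> L"
    and L_bounded: "\<And>v. v \<in> L \<Longrightarrow> sup_norm nv v \<le> R"
    and "0 \<le> C"
    and coercive: "\<And>w. sup_norm nv w \<le> C * sup_norm nv (mat_app G w)"
    and small: "mat_norm nv (F - G) * (C * R) < r"
    and G_mem: "mat_app G w \<in> L"
  shows "mat_app F w \<in> L"
proof -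
  have "sup_norm nv w \<le> C * R"
    using coercive[of w] L_bounded[OF G_mem] mult_left_mono[OF _ \<open>0 \<le> C\<close>] by (meson order_trans)
  then have "sup_norm nv (mat_app (F - G) w) \<le> mat_norm nv (F - G) * (C * R)"
    using sup_norm_mat_app_le[of "F - G" w] mult_left_mono[OF _ mat_norm_nonneg]
    by (meson order_trans)
  then have "mat_app (F - G) w \<in> L"
    using small L_ball by simp
  from L_add[OF G_mem this] show ?thesis
    by (simp add: mat_app_diff_left)
qed

lemma lattice_preimage_perturb:
  assumes L_add: "\<And>u v. u \<in> L \<Longrightarrow> v \<in> L \<Longrightarrow> (\<lambda>i. u i + v i) \<in> L"
    and L_ball: "\<And>v. sup_norm nv v < r \<Longrightarrow> v \<in> L"
    and L_bounded: "\<And>v. v \<in> L \<Longrightarrow> sup_norm nv v \<le> R"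
    and "0 \<le> C"
    and coercive: "\<And>w. sup_norm nv w \<le> C * sup_norm nv (mat_app F0 w)"
    and "C * mat_norm nv (F - F0) < 1"
    and small: "mat_norm nv (F - F0) * (C * R) < r"
  shows "mat_app F -` L = mat_app F0 -` L"
proof -
  have coercive_F: "\<And>w. sup_norm nv w \<le> C * sup_norm nv (mat_app F w)"
    by (rule coercive_perturb) fact+
  have small': "mat_norm nv (F0 - F) * (C * R) < r"
    using small by (simp only: mat_norm_minus_commute[of F0 F])
  show ?thesis
    using perturbed_mat_app_mem[OF L_add L_ball L_bounded \<open>0 \<le> C\<close> coercive small]
      perturbed_mat_app_mem[OF L_add L_ball L_bounded \<open>0 \<le> C\<close> coercive_F small']
    by blast
qed

lemma lattice_preimage_locally_constant:
  assumes L_add: "\<And>u v. u \<in> L \<Longrightarrow> v \<in> L \<Longrightarrow> (\<lambda>i. u i + v i) \<in> L"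
    and L_ball: "\<And>v. sup_norm nv v < r \<Longrightarrow> v \<in> L"
    and L_bounded: "\<And>v. v \<in> L \<Longrightarrow> sup_norm nv v \<le> R"
    and "r > 0" and "R > 0" and "C > 0"
    and coercive: "\<And>w. sup_norm nv w \<le> C * sup_norm nv (mat_app F0 w)"
  obtains d where "d > 0"
    and "\<And>F. mat_norm nv (F - F0) < d \<Longrightarrow> inj (mat_app F) \<and> mat_app F -` L = mat_app F0 -` L"
proof -
  obtain d where d: "d > 0" "C * d < 1" "d * (C * R) < r"
    using field_lbound_gt_zero[of "1 / C" "r / (C * R)"] \<open>r > 0\<close> \<open>R > 0\<close> \<open>C > 0\<close>
    by (auto simp: field_simps)
  show thesis
  proof (rule that[OF d(1)])
    fix F
    assume close: "mat_norm nv (F - F0) < d"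
    have small: "C * mat_norm nv (F - F0) < 1" "mat_norm nv (F - F0) * (C * R) < r"
      using order.strict_trans[OF mult_strict_left_mono[OF close \<open>C > 0\<close>] d(2)]
        order.strict_trans[OF mult_strict_right_mono[OF close mult_pos_pos[OF \<open>C > 0\<close> \<open>R > 0\<close>]] d(3)]
      by blast+
    have "0 \<le> C"
      using \<open>C > 0\<close> by simp
    then show "inj (mat_app F) \<and> mat_app F -` L = mat_app F0 -` L"
      using coercive_imp_inj[OF coercive_perturb[OF _ coercive small(1)]]
        lattice_preimage_perturb[OF L_add L_ball L_bounded _ coercive small]
      by blast
  qed
qed

end

theorem proposition4p7:
  fixes nv :: "'k::field \<Rightarrow> real"
    and L :: "('n::finite \<Rightarrow> 'k) set"
    and F0 :: "'n \<Rightarrow> 'm::finite \<Rightarrow> 'k"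
  assumes "nonarch_local_field nv"
    and "is_lattice nv L"
    and "inj (mat_app F0)"
  shows "\<exists>U. openin (hom_top nv) U \<and> F0 \<in> U \<and>
           (\<forall>F\<in>U. inj (mat_app F) \<and>
              mat_app F -` (range (mat_app F) \<inter> L) =
              mat_app F0 -` (range (mat_app F0) \<inter> L))"
proof -
  have nv: "nonarch_abs nv"
    using assms(1) unfolding nonarch_local_field_def by blast
  have L_add: "\<And>u v. u \<in> L \<Longrightarrow> v \<in> L \<Longrightarrow> (\<lambda>i. u i + v i) \<in> L"
    and L_open: "openin (vec_top nv) L" and L_zero: "(\<lambda>_. 0) \<in> L"
    and L_compact: "compactin (vec_top nv) L"
    using assms(2) unfolding is_lattice_def by blast+
  obtain r where r: "r > 0" "\<And>v. sup_norm nv v < r \<Longrightarrow> v \<in> L"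
    using openin_vec_top_contains_sup_norm_ball[OF nv L_open L_zero] by blast
  obtain R where R: "R > 0" "\<And>v. v \<in> L \<Longrightarrow> sup_norm nv v \<le> R"
    using compactin_vec_top_sup_norm_bounded[OF nv L_compact] by blast
  obtain C where C: "C > 0" "\<And>w. sup_norm nv w \<le> C * sup_norm nv (mat_app F0 w)"
    using inj_mat_app_imp_coercive[OF nv assms(3)] by blast
  obtain d where d: "d > 0"
    "\<And>F. mat_norm nv (F - F0) < d \<Longrightarrow> inj (mat_app F) \<and> mat_app F -` L = mat_app F0 -` L"
    using lattice_preimage_locally_constant[OF nv L_add r(2) R(2) r(1) R(1) C] by blast
  show ?thesis
  proof (intro exI[of _ "{F. mat_norm nv (F - F0) < d}"] conjI)
    show "openin (hom_top nv) {F. mat_norm nv (F - F0) < d}"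
      by (rule openin_hom_top_mat_norm_ball[OF nv])
    show "F0 \<in> {F. mat_norm nv (F - F0) < d}"
      using d(1) by (simp add: mat_norm_less_iff nv)
    show "\<forall>F\<in>{F. mat_norm nv (F - F0) < d}. inj (mat_app F) \<and>
        mat_app F -` (range (mat_app F) \<inter> L) = mat_app F0 -` (range (mat_app F0) \<inter> L)"
      using d(2) by blast
  qed
qed

end
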